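(* Each of the following holds; each item asserts the existence of a probability space $(\Omega,\mathcal{F},P)$ and real random variables $X,X_1,X_2,\dots$ on it with the stated properties. (a) There exist such $X,X_n$ with $X_n\xrightarrow{S_3\text{-}d}X$ but not $X_n\xrightarrow{S_2\text{-}d}X$. (b) There exist such $X,X_n$ with $X_n\xrightarrow{S_2\text{-}d}X$ but not $X_n\xrightarrow{S_3\text{-}d}X$. (c) For every $\alpha>0$ there exist such $X,X_n$ with $X_n\xrightarrow{S_\alpha\text{-}a.s.}X$ but not $X_n\xrightarrow{S_3\text{-}d}X$. (d) There exist such $X,X_n$ such that $X_n$ converges completely to $X$ but not $X_n\xrightarrow{S_3\text{-}d}X$.
   Context: Let $X,X_1,X_2,\dots$ be real random variables on a probability space $(\Omega,\mathcal{F},P)$, and let $F_n(x)=P(X_n\le x)$ and $F(x)=P(X\le x)$. - Complete convergence: for every $\varepsilon>0$, $\sum_{n=1}^\infty P(|X_n-X|\ge\varepsilon)<\infty$. - $X_n\xrightarrow{S_\alpha\text{-}a.s.}X$ ($\alpha>0$): $\sum_{n=1}^\infty |X_n-X|^\alpha<\infty$ almost surely. - $X_n\xrightarrow{S_2\text{-}d}X$: for every continuity point $x$ of $F$, $\sum_{n=1}^\infty |F_n(x)-F(x)|<\infty$. - $X_n\xrightarrow{S_3\text{-}d}X$: for every real $t$, $\sum_{n=1}^\infty |E[e^{itX_n}]-E[e^{itX}]|<\infty$. *)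

theory Defs
  imports "HOL-Probability.Probability"
begin

text \<open>Random variables X, X_1, X_2, ... on a probability space M.
  The sequence X_1, X_2, ... is represented by Xs :: nat => _ (index shift is
  irrelevant for all summability notions below).\<close>

definition rv_setting :: "'a measure \<Rightarrow> ('a \<Rightarrow> real) \<Rightarrow> (nat \<Rightarrow> 'a \<Rightarrow> real) \<Rightarrow> bool" where
  "rv_setting M X Xs \<longleftrightarrow> prob_space M \<and> X \<in> borel_measurable M \<and> (\<forall>n. Xs n \<in> borel_measurable M)"

definition cdf_of :: "'a measure \<Rightarrow> ('a \<Rightarrow> real) \<Rightarrow> real \<Rightarrow> real" where
  "cdf_of M Y x = measure M {\<omega> \<in> space M. Y \<omega> \<le> x}"

definition complete_conv :: "'a measure \<Rightarrow> (nat \<Rightarrow> 'a \<Rightarrow> real) \<Rightarrow> ('a \<Rightarrow> real) \<Rightarrow> bool" where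
  "complete_conv M Xs X \<longleftrightarrow>
     (\<forall>\<epsilon>>0. summable (\<lambda>n. measure M {\<omega> \<in> space M. \<bar>Xs n \<omega> - X \<omega>\<bar> \<ge> \<epsilon>}))"

definition S_alpha_as :: "real \<Rightarrow> 'a measure \<Rightarrow> (nat \<Rightarrow> 'a \<Rightarrow> real) \<Rightarrow> ('a \<Rightarrow> real) \<Rightarrow> bool" where
  "S_alpha_as \<alpha> M Xs X \<longleftrightarrow> (AE \<omega> in M. summable (\<lambda>n. \<bar>Xs n \<omega> - X \<omega>\<bar> powr \<alpha>))"

definition S2_d :: "'a measure \<Rightarrow> (nat \<Rightarrow> 'a \<Rightarrow> real) \<Rightarrow> ('a \<Rightarrow> real) \<Rightarrow> bool" where
  "S2_d M Xs X \<longleftrightarrow>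
     (\<forall>x. isCont (cdf_of M X) x \<longrightarrow> summable (\<lambda>n. \<bar>cdf_of M (Xs n) x - cdf_of M X x\<bar>))"

definition S3_d :: "'a measure \<Rightarrow> (nat \<Rightarrow> 'a \<Rightarrow> real) \<Rightarrow> ('a \<Rightarrow> real) \<Rightarrow> bool" where
  "S3_d M Xs X \<longleftrightarrow>
     (\<forall>t::real. summable (\<lambda>n. cmod (char (distr M borel (Xs n)) t - char (distr M borel X) t)))"

end

theory Submission
  imports Defs
begin

text \<open>
  All four counterexamples live on the uniform distribution on [0, 1]; in each, one mode of
  convergence sees a non-summable discrepancy of order 1/n while the other sees a summable
  one or none at all.
  (a) Shifting X = \<omega>^2 by 1/n^2 moves every characteristic function value by
  at most |t|/n^2, but the density of X blows up at 0, so the distribution function at its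
  continuity point 0 moves by 1/n.
  (b), (d) The constants X_n = -1/n converge completely to 0 and their distribution
  functions eventually agree with that of 0 at every point, yet |exp(-i/n) - 1| is of
  order 1/n.
  (c) For X_n the indicator of [0, 1/n], every \<omega> > 0 lies in only finitely many
  of the intervals, so the series of |X_n|^\<alpha> is a.s. a finite sum, while the
  characteristic functions at \<pi> differ from 1 by 2/n.
\<close>

lemma cmod_iexp_minus_1_le: "cmod (iexp x - 1) \<le> \<bar>x\<bar>"
  using iexp_approx1[of x 0] by simp

lemma cmod_iexp_minus_1_ge:
  assumes "\<bar>x\<bar> \<le> 1"
  shows "\<bar>x\<bar> / 2 \<le> cmod (iexp x - 1)"
proof -
  have "cmod (iexp x - 1 - \<i> * x) \<le> x\<^sup>2 / 2"
    using iexp_approx1[of x 1] by (simp add: numeral_2_eq_2 diff_diff_eq)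
  moreover have "cmod (\<i> * x) \<le> cmod (iexp x - 1) + cmod (iexp x - 1 - \<i> * x)"
    using norm_triangle_ineq4[of "iexp x - 1" "iexp x - 1 - \<i> * x"] by simp
  moreover have "x\<^sup>2 \<le> \<bar>x\<bar>"
    using mult_left_le[OF assms abs_ge_zero[of x]] by (simp add: power2_eq_square)
  ultimately show ?thesis by (simp add: norm_mult)
qed

lemma not_summable_inverse_Suc: "\<not> summable (\<lambda>n. inverse (real (Suc n)))"
  using not_summable_harmonic summable_Suc_iff[of "\<lambda>n. inverse (real n)"] by simp

lemma summable_inverse_Suc_power2: "summable (\<lambda>n. inverse (real (Suc n)) ^ 2)"
  using inverse_power_summable[of 2, where 'a=real] summable_Suc_iff[of "\<lambda>n. inverse (real n ^ 2)"]
  by (simp add: power_inverse)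

lemma summable_eventually_zero:
  fixes f :: "nat \<Rightarrow> 'a::real_normed_vector"
  assumes "eventually (\<lambda>n. f n = 0) sequentially"
  shows "summable f"
  using summable_cong[OF assms] by simp

lemma cdf_of_add_const: "cdf_of M (\<lambda>\<omega>. X \<omega> + c) x = cdf_of M X (x - c)"
  unfolding cdf_of_def by (simp add: le_diff_eq)

lemma not_S2_d_add_const:
  assumes "isCont (cdf_of M X) x"
    and "\<not> summable (\<lambda>n. \<bar>cdf_of M X (x - c n) - cdf_of M X x\<bar>)"
  shows "\<not> S2_d M (\<lambda>n \<omega>. X \<omega> + c n) X"
  using assms unfolding S2_d_def cdf_of_add_const by blast

lemma complete_conv_const:
  assumes "c \<longlonglongrightarrow> 0"
  shows "complete_conv M (\<lambda>n _. c n) (\<lambda>_. 0)"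
  unfolding complete_conv_def
proof (intro allI impI)
  fix \<epsilon> :: real
  assume "\<epsilon> > 0"
  with tendsto_rabs_zero[OF assms] have "eventually (\<lambda>n. \<bar>c n\<bar> < \<epsilon>) sequentially"
    by (rule order_tendstoD(2))
  then have "eventually (\<lambda>n. measure M {\<omega> \<in> space M. \<epsilon> \<le> \<bar>c n - 0\<bar>} = 0) sequentially"
    by eventually_elim auto
  then show "summable (\<lambda>n. measure M {\<omega> \<in> space M. \<epsilon> \<le> \<bar>c n - 0\<bar>})"
    by (rule summable_eventually_zero)
qed

text \<open>No sign condition on \<open>\<alpha>\<close> is needed because \<open>0 powr \<alpha> = 0\<close> for every \<open>\<alpha>\<close>.\<close>

lemma S_alpha_as_indicator:
  assumes "AE \<omega> in M. eventually (\<lambda>n. \<omega> \<notin> A n) sequentially"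
  shows "S_alpha_as \<alpha> M (\<lambda>n. indicator (A n)) (\<lambda>_. 0)"
  unfolding S_alpha_as_def using assms
proof eventually_elim
  case (elim \<omega>)
  then have "eventually (\<lambda>n. \<bar>indicator (A n) \<omega> - 0\<bar> powr \<alpha> = (0::real)) sequentially"
    by eventually_elim simp
  then show ?case
    by (rule summable_eventually_zero)
qed

lemma char_return [simp]: "char (return borel c) t = iexp (t * c)"
  unfolding char_def by (simp add: integral_return)

context prob_space
begin

lemma char_distr_add_const:
  assumes [measurable]: "X \<in> borel_measurable M"
  shows "char (distr M borel (\<lambda>\<omega>. X \<omega> + c)) t = iexp (t * c) * char (distr M borel X) t"
  unfolding char_def
  by (simp add: integral_distr distrib_left exp_add mult.commute[of _ "iexp (t * c)"])

lemma char_distr_indicator: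
  assumes "A \<in> events"
  shows "char (distr M borel (indicator A)) t = 1 + prob A * (iexp t - 1)"
proof -
  have "iexp (t * indicator A \<omega>) = 1 + of_real (indicator A \<omega>) * (iexp t - 1)" for \<omega>
    by (simp add: indicator_def)
  then have "char (distr M borel (indicator A)) t
      = (CLINT \<omega>|M. 1 + of_real (indicator A \<omega>) * (iexp t - 1))"
    unfolding char_def using assms by (simp add: integral_distr)
  also have "\<dots> = 1 + prob A * (iexp t - 1)"
  proof -
    have "integrable M (indicator A :: 'a \<Rightarrow> real)"
      using assms by (simp add: emeasure_eq_measure)
    then show ?thesis
      using assms by (subst Bochner_Integration.integral_add) (simp_all add: prob_space)
  qed
  finally show ?thesis .
qed

lemma cdf_of_const: "cdf_of M (\<lambda>_. a) x = (if a \<le> x then 1 else 0)"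
  unfolding cdf_of_def using prob_space by auto

lemma S3_d_add_const:
  assumes [measurable]: "X \<in> borel_measurable M" and "summable (\<lambda>n. \<bar>c n\<bar>)"
  shows "S3_d M (\<lambda>n \<omega>. X \<omega> + c n) X"
  unfolding S3_d_def
proof
  fix t :: real
  have bound: "cmod (char (distr M borel (\<lambda>\<omega>. X \<omega> + c n)) t - char (distr M borel X) t)
      \<le> \<bar>t\<bar> * \<bar>c n\<bar>" for n
  proof -
    have "cmod (char (distr M borel (\<lambda>\<omega>. X \<omega> + c n)) t - char (distr M borel X) t)
        = cmod ((iexp (t * c n) - 1) * char (distr M borel X) t)"
      by (simp add: char_distr_add_const left_diff_distrib)
    also have "\<dots> = cmod (iexp (t * c n) - 1) * cmod (char (distr M borel X) t)"
      by (rule norm_mult)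
    also have "\<dots> \<le> \<bar>t * c n\<bar> * 1"
      by (intro mult_mono cmod_iexp_minus_1_le real_distribution.cmod_char_le_1
          real_distribution_distr) simp_all
    finally show ?thesis by (simp add: abs_mult)
  qed
  have "summable (\<lambda>n. \<bar>t\<bar> * \<bar>c n\<bar>)"
    using assms(2) by (rule summable_mult)
  then show "summable (\<lambda>n. cmod (char (distr M borel (\<lambda>\<omega>. X \<omega> + c n)) t
      - char (distr M borel X) t))"
    by (rule summable_comparison_test') (simp add: bound)
qed

lemma not_S3_d_const:
  assumes "c \<longlonglongrightarrow> 0" and "\<not> summable (\<lambda>n. \<bar>c n\<bar>)"
  shows "\<not> S3_d M (\<lambda>n _. c n) (\<lambda>_. 0)"
proof
  assume "S3_d M (\<lambda>n _. c n) (\<lambda>_. 0)"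
  then have "summable (\<lambda>n. cmod (char (distr M borel (\<lambda>_. c n)) 1
      - char (distr M borel (\<lambda>_. 0)) 1))"
    unfolding S3_d_def by blast
  then have "summable (\<lambda>n. cmod (iexp (c n) - 1))"
    by simp
  moreover have "eventually (\<lambda>n. norm (\<bar>c n\<bar> / 2) \<le> cmod (iexp (c n) - 1)) sequentially"
  proof -
    have "eventually (\<lambda>n. \<bar>c n\<bar> < 1) sequentially"
      using tendsto_rabs_zero[OF assms(1)] by (rule order_tendstoD(2)) simp
    then show ?thesis
    proof eventually_elim
      case (elim n)
      then show ?case
        using cmod_iexp_minus_1_ge[of "c n"] by simp
    qed
  qed
  ultimately have "summable (\<lambda>n. \<bar>c n\<bar> / 2)"
    by (rule summable_comparison_test_ev[rotated])
  with assms(2) show False by simp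
qed

lemma S2_d_const_nonpos:
  assumes "c \<longlonglongrightarrow> 0" and "\<And>n. c n \<le> 0"
  shows "S2_d M (\<lambda>n _. c n) (\<lambda>_. 0)"
  unfolding S2_d_def
proof (intro allI impI)
  fix x :: real
  have "eventually (\<lambda>n. \<bar>cdf_of M (\<lambda>_. c n) x - cdf_of M (\<lambda>_. 0) x\<bar> = 0) sequentially"
  proof (cases "x < 0")
    case True
    with assms(1) have "eventually (\<lambda>n. x < c n) sequentially"
      by (intro order_tendstoD(1))
    then show ?thesis
      by eventually_elim (use True in \<open>simp add: cdf_of_const\<close>)
  next
    case False
    then have "c n \<le> x" for n
      using assms(2)[of n] by linarith
    then show ?thesis
      using False by (simp add: cdf_of_const)
  qed
  then show "summable (\<lambda>n. \<bar>cdf_of M (\<lambda>_. c n) x - cdf_of M (\<lambda>_. 0) x\<bar>)"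
    by (rule summable_eventually_zero)
qed

lemma not_S3_d_indicator:
  assumes "\<And>n. A n \<in> events" and "\<not> summable (\<lambda>n. prob (A n))"
  shows "\<not> S3_d M (\<lambda>n. indicator (A n)) (\<lambda>_. 0)"
proof
  assume "S3_d M (\<lambda>n. indicator (A n)) (\<lambda>_. 0)"
  then have "summable (\<lambda>n. cmod (char (distr M borel (indicator (A n))) pi
      - char (distr M borel (\<lambda>_. 0)) pi))"
    unfolding S3_d_def by blast
  moreover have "cmod (char (distr M borel (indicator (A n))) pi
      - char (distr M borel (\<lambda>_. 0)) pi) = 2 * prob (A n)" for n
    using assms(1) by (simp add: char_distr_indicator norm_mult)
  ultimately show False
    using assms(2) by simp
qed

end

definition unit_uniform :: "real measure" where
  "unit_uniform = uniform_measure lborel {0..1}"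

lemma prob_space_unit_uniform: "prob_space unit_uniform"
  unfolding unit_uniform_def by (rule prob_space_uniform_measure) auto

lemma space_unit_uniform [simp]: "space unit_uniform = UNIV"
  and sets_unit_uniform [simp]: "sets unit_uniform = sets borel"
  unfolding unit_uniform_def by auto

lemma borel_measurable_unit_uniform [simp]:
  "f \<in> borel_measurable unit_uniform \<longleftrightarrow> f \<in> borel_measurable borel"
  by (simp only: measurable_cong_sets[OF sets_unit_uniform refl])

lemma measure_unit_uniform:
  "A \<in> sets borel \<Longrightarrow> measure unit_uniform A = measure lborel (A \<inter> {0..1})"
  unfolding unit_uniform_def by (simp add: Int_commute)

lemma AE_unit_uniform_pos: "AE \<omega> in unit_uniform. 0 < \<omega>"
  unfolding unit_uniform_def
proof (rule AE_uniform_measureI)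
  show "AE \<omega> in lborel. \<omega> \<in> {0..1} \<longrightarrow> 0 < (\<omega>::real)"
    using AE_lborel_singleton[of "0::real"] by (rule eventually_mono) auto
qed simp

lemma measure_unit_uniform_atMost:
  assumes "0 \<le> p" and "p \<le> 1"
  shows "measure unit_uniform {..p} = p"
proof -
  have "{..p} \<inter> {0..1} = {0..p}"
    using assms by auto
  then show ?thesis
    using assms by (simp add: measure_unit_uniform)
qed

lemma cdf_of_unit_uniform_square:
  "cdf_of unit_uniform (\<lambda>\<omega>. \<omega>\<^sup>2) = (\<lambda>y. sqrt (max 0 (min 1 y)))"
proof
  fix y :: real
  have "{\<omega>::real. \<omega>\<^sup>2 \<le> y} \<in> sets borel"
    by measurable
  then have "cdf_of unit_uniform (\<lambda>\<omega>. \<omega>\<^sup>2) y = measure lborel ({\<omega>. \<omega>\<^sup>2 \<le> y} \<inter> {0..1})"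
    unfolding cdf_of_def by (simp add: measure_unit_uniform)
  also have "\<dots> = sqrt (max 0 (min 1 y))"
  proof (cases "y < 0")
    case True
    then have "{\<omega>. \<omega>\<^sup>2 \<le> y} \<inter> {0..1} = {}"
      by (auto dest: order_trans[OF zero_le_power2])
    then show ?thesis
      using True by simp
  next
    case False
    have le_sqrt_iff: "x \<le> sqrt z \<longleftrightarrow> x\<^sup>2 \<le> z" if "0 \<le> x" "0 \<le> z" for x z :: real
      using that by (metis abs_of_nonneg real_le_rsqrt sqrt_ge_absD)
    have "{\<omega>. \<omega>\<^sup>2 \<le> y} \<inter> {0..1} = {0..sqrt (min 1 y)}"
    proof (intro set_eqI iffI)
      fix x
      assume "x \<in> {\<omega>. \<omega>\<^sup>2 \<le> y} \<inter> {0..1}"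
      then show "x \<in> {0..sqrt (min 1 y)}"
        using le_sqrt_iff[of x "min 1 y"] False by (simp add: abs_square_le_1)
    next
      fix x
      assume "x \<in> {0..sqrt (min 1 y)}"
      then show "x \<in> {\<omega>. \<omega>\<^sup>2 \<le> y} \<inter> {0..1}"
        using le_sqrt_iff[of x "min 1 y"] False by (simp add: abs_square_le_1)
    qed
    then show ?thesis
      using False by simp
  qed
  finally show "cdf_of unit_uniform (\<lambda>\<omega>. \<omega>\<^sup>2) y = sqrt (max 0 (min 1 y))" .
qed

lemma ex_S3_d_not_S2_d:
  "\<exists>(M::real measure) X Xs. rv_setting M X Xs \<and> S3_d M Xs X \<and> \<not> S2_d M Xs X"
proof -
  interpret prob_space unit_uniform
    by (rule prob_space_unit_uniform)
  define c where "c n = - (inverse (real (Suc n)) ^ 2)" for n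
  have "rv_setting unit_uniform (\<lambda>\<omega>. \<omega>\<^sup>2) (\<lambda>n \<omega>. \<omega>\<^sup>2 + c n)"
    by (simp add: rv_setting_def prob_space_unit_uniform)
  moreover have "S3_d unit_uniform (\<lambda>n \<omega>. \<omega>\<^sup>2 + c n) (\<lambda>\<omega>. \<omega>\<^sup>2)"
    by (rule S3_d_add_const) (use summable_inverse_Suc_power2 in \<open>simp_all add: c_def\<close>)
  moreover have "\<not> S2_d unit_uniform (\<lambda>n \<omega>. \<omega>\<^sup>2 + c n) (\<lambda>\<omega>. \<omega>\<^sup>2)"
  proof (rule not_S2_d_add_const[where x = 0])
    show "isCont (cdf_of unit_uniform (\<lambda>\<omega>. \<omega>\<^sup>2)) 0"
      unfolding cdf_of_unit_uniform_square by (intro continuous_intros)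
    have "cdf_of unit_uniform (\<lambda>\<omega>. \<omega>\<^sup>2) (0 - c n) = inverse (real (Suc n))" for n
    proof -
      have "inverse (real (Suc n)) ^ 2 \<le> 1"
        by (intro power_le_one) (simp_all add: inverse_le_1_iff)
      then show ?thesis
        by (simp add: cdf_of_unit_uniform_square c_def)
    qed
    then show "\<not> summable (\<lambda>n. \<bar>cdf_of unit_uniform (\<lambda>\<omega>. \<omega>\<^sup>2) (0 - c n)
        - cdf_of unit_uniform (\<lambda>\<omega>. \<omega>\<^sup>2) 0\<bar>)"
      using not_summable_inverse_Suc by (simp add: cdf_of_unit_uniform_square)
  qed
  ultimately show ?thesis
    by blast
qed

lemma ex_S2_d_complete_conv_not_S3_d:
  "\<exists>(M::real measure) X Xs.
     rv_setting M X Xs \<and> S2_d M Xs X \<and> complete_conv M Xs X \<and> \<not> S3_d M Xs X"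
proof -
  interpret prob_space unit_uniform
    by (rule prob_space_unit_uniform)
  define c where "c n = - inverse (real (Suc n))" for n
  have c_tendsto: "c \<longlonglongrightarrow> 0"
    unfolding c_def using tendsto_minus[OF LIMSEQ_inverse_real_of_nat] by simp
  have "rv_setting unit_uniform (\<lambda>_. 0) (\<lambda>n _. c n)"
    by (simp add: rv_setting_def prob_space_unit_uniform)
  moreover have "S2_d unit_uniform (\<lambda>n _. c n) (\<lambda>_. 0)"
    by (rule S2_d_const_nonpos[OF c_tendsto]) (simp add: c_def)
  moreover have "complete_conv unit_uniform (\<lambda>n _. c n) (\<lambda>_. 0)"
    by (rule complete_conv_const[OF c_tendsto])
  moreover have "\<not> S3_d unit_uniform (\<lambda>n _. c n) (\<lambda>_. 0)"
    by (rule not_S3_d_const[OF c_tendsto]) (use not_summable_inverse_Suc in \<open>simp add: c_def\<close>)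
  ultimately show ?thesis
    by blast
qed

lemma ex_S_alpha_as_not_S3_d:
  "\<exists>(M::real measure) X Xs. rv_setting M X Xs \<and> S_alpha_as \<alpha> M Xs X \<and> \<not> S3_d M Xs X"
proof -
  interpret prob_space unit_uniform
    by (rule prob_space_unit_uniform)
  define A where "A n = {..inverse (real (Suc n))}" for n
  have "rv_setting unit_uniform (\<lambda>_. 0) (\<lambda>n. indicator (A n))"
    by (simp add: rv_setting_def prob_space_unit_uniform A_def)
  moreover have "S_alpha_as \<alpha> unit_uniform (\<lambda>n. indicator (A n)) (\<lambda>_. 0)"
  proof (rule S_alpha_as_indicator)
    show "AE \<omega> in unit_uniform. eventually (\<lambda>n. \<omega> \<notin> A n) sequentially"
      using AE_unit_uniform_pos
    proof eventually_elim
      case (elim \<omega>)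
      with LIMSEQ_inverse_real_of_nat
      have "eventually (\<lambda>n. inverse (real (Suc n)) < \<omega>) sequentially"
        by (rule order_tendstoD(2))
      then show ?case
        by eventually_elim (simp add: A_def)
    qed
  qed
  moreover have "\<not> S3_d unit_uniform (\<lambda>n. indicator (A n)) (\<lambda>_. 0)"
  proof (rule not_S3_d_indicator)
    have "prob (A n) = inverse (real (Suc n))" for n
      unfolding A_def by (rule measure_unit_uniform_atMost) (simp_all add: inverse_le_1_iff)
    then show "\<not> summable (\<lambda>n. prob (A n))"
      using not_summable_inverse_Suc by simp
  qed (simp add: A_def)
  ultimately show ?thesis
    by blast
qed

theorem mainTheorem4:
  shows "(\<exists>(M::real measure) X Xs. rv_setting M X Xs \<and> S3_d M Xs X \<and> \<not> S2_d M Xs X)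
       \<and> (\<exists>(M::real measure) X Xs. rv_setting M X Xs \<and> S2_d M Xs X \<and> \<not> S3_d M Xs X)
       \<and> (\<forall>\<alpha>>0. \<exists>(M::real measure) X Xs. rv_setting M X Xs \<and> S_alpha_as \<alpha> M Xs X \<and> \<not> S3_d M Xs X)
       \<and> (\<exists>(M::real measure) X Xs. rv_setting M X Xs \<and> complete_conv M Xs X \<and> \<not> S3_d M Xs X)"
  using ex_S3_d_not_S2_d ex_S2_d_complete_conv_not_S3_d ex_S_alpha_as_not_S3_d by blast

end
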